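(* Let $\mathcal{B}$ be a Boolean control network. If $\mathcal{B}$ satisfies Type-III observability, then $\mathcal{B}$ is online observable.
   Context: $\mathbb{B}=\{0,1\}$. A BCN has inputs $\mathcal{I}=\mathbb{B}^\ell$, states $\mathcal{S}=\mathbb{B}^m$, outputs $\mathcal{O}=\mathbb{B}^n$ and updating rules $\sigma:\mathcal{I}\times\mathcal{S}\to\mathcal{S}$, $\rho:\mathcal{S}\to\mathcal{O}$, with $\mathsf{s}(t+1)=\sigma(\mathsf{i}(t),\mathsf{s}(t))$, $\mathsf{o}(t)=\rho(\mathsf{s}(t))$. For a state $\mathsf{s}$ and input sequence $\mathsf{I}=\mathsf{i}(0)\ldots\mathsf{i}(t)$, $H^{[0,t]}(\mathsf{s},\mathsf{I})=\mathsf{o}(0)\ldots\mathsf{o}(t+1)$ is the output sequence of the run with $\mathsf{s}(0)=\mathsf{s}$. Type-III observability: there exists an input sequence $\mathsf{I}=\mathsf{i}(0)\ldots\mathsf{i}(t)$ such that for any two distinct states $\mathsf{s},\mathsf{s}'$, $H^{[0,t]}(\mathsf{s},\mathsf{I})\ne H^{[0,t]}(\mathsf{s}',\mathsf{I})$. Online observability: with $\varepsilon$ denoting empty input/output, let $\xi(\mathsf{i},\mathsf{s})=\sigma(\mathsf{i},\mathsf{s})$ for $\mathsf{i}\ne\varepsilon$, $\xi(\varepsilon,\mathsf{s})=\mathsf{s}$; for $\mathsf{S}\subseteq\mathcal{S}$, $\zeta(\mathsf{S},\mathsf{i},\mathsf{o})=\{\xi(\mathsf{i},\mathsf{s}):\mathsf{s}\in\mathsf{S},\rho(\xi(\mathsf{i},\mathsf{s}))=\mathsf{o}\}$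 if $\mathsf{o}\ne\varepsilon$ and $\zeta(\mathsf{S},\mathsf{i},\varepsilon)=\{\xi(\mathsf{i},\mathsf{s}):\mathsf{s}\in\mathsf{S}\}$. For nonempty $\mathsf{S}$: $P_0(\mathsf{S})$ iff $|\mathsf{S}|=1$; $P_{n+1}(\mathsf{S})$ iff $|\mathsf{S}|=1$ or there is $\mathsf{i}\in\mathcal{I}$ with $|\zeta(\mathsf{S},\mathsf{i},\varepsilon)|=|\mathsf{S}|$ such that every nonempty $\zeta(\mathsf{S},\mathsf{i},\mathsf{o})$, $\mathsf{o}\in\mathcal{O}$, satisfies $P_n$. $\Gamma(\mathsf{S})$ is the least $n$ with $P_n(\mathsf{S})$, or $\infty$ if none. The BCN is online observable if $\Gamma(\zeta(\mathcal{S},\varepsilon,\mathsf{o}))\ne\infty$ for every $\mathsf{o}\in\mathcal{O}$ with $\zeta(\mathcal{S},\varepsilon,\mathsf{o})\ne\emptyset$. *)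

theory Defs
  imports Main "HOL-Library.Extended_Nat"
begin

(* B^k is rendered as the set of boolean lists of length k. *)
definition bvec :: "nat \<Rightarrow> bool list set" where
  "bvec k = {v. length v = k}"

definition bcn :: "nat \<Rightarrow> nat \<Rightarrow> nat \<Rightarrow>
    (bool list \<Rightarrow> bool list \<Rightarrow> bool list) \<Rightarrow> (bool list \<Rightarrow> bool list) \<Rightarrow> bool" where
  "bcn l m n \<sigma> \<rho> \<longleftrightarrow>
     (\<forall>i\<in>bvec l. \<forall>s\<in>bvec m. \<sigma> i s \<in> bvec m) \<and> (\<forall>s\<in>bvec m. \<rho> s \<in> bvec n)"

fun traj :: "(bool list \<Rightarrow> bool list \<Rightarrow> bool list) \<Rightarrow> bool list \<Rightarrow> bool list list \<Rightarrow> bool list list" where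
  "traj \<sigma> s [] = [s]"
| "traj \<sigma> s (i # I) = s # traj \<sigma> (\<sigma> i s) I"

(* H^[0,t](s, I) = o(0) ... o(t+1) *)
definition H :: "(bool list \<Rightarrow> bool list \<Rightarrow> bool list) \<Rightarrow> (bool list \<Rightarrow> bool list) \<Rightarrow>
    bool list \<Rightarrow> bool list list \<Rightarrow> bool list list" where
  "H \<sigma> \<rho> s I = map \<rho> (traj \<sigma> s I)"

definition type3_observable :: "nat \<Rightarrow> nat \<Rightarrow> nat \<Rightarrow>
    (bool list \<Rightarrow> bool list \<Rightarrow> bool list) \<Rightarrow> (bool list \<Rightarrow> bool list) \<Rightarrow> bool" where
  "type3_observable l m n \<sigma> \<rho> \<longleftrightarrow>
     (\<exists>I. I \<noteq> [] \<and> set I \<subseteq> bvec l \<and>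
        (\<forall>s\<in>bvec m. \<forall>s'\<in>bvec m. s \<noteq> s' \<longrightarrow> H \<sigma> \<rho> s I \<noteq> H \<sigma> \<rho> s' I))"

(* empty input / output epsilon is None *)
definition xi :: "(bool list \<Rightarrow> bool list \<Rightarrow> bool list) \<Rightarrow> bool list option \<Rightarrow> bool list \<Rightarrow> bool list" where
  "xi \<sigma> i s = (case i of None \<Rightarrow> s | Some a \<Rightarrow> \<sigma> a s)"

definition zeta :: "(bool list \<Rightarrow> bool list \<Rightarrow> bool list) \<Rightarrow> (bool list \<Rightarrow> bool list) \<Rightarrow>
    bool list set \<Rightarrow> bool list option \<Rightarrow> bool list option \<Rightarrow> bool list set" where
  "zeta \<sigma> \<rho> S i out = (case out of
      None \<Rightarrow> {xi \<sigma> i s | s. s \<in> S}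
    | Some ob \<Rightarrow> {xi \<sigma> i s | s. s \<in> S \<and> \<rho> (xi \<sigma> i s) = ob})"

fun Pn :: "nat \<Rightarrow> nat \<Rightarrow> (bool list \<Rightarrow> bool list \<Rightarrow> bool list) \<Rightarrow> (bool list \<Rightarrow> bool list) \<Rightarrow>
    nat \<Rightarrow> bool list set \<Rightarrow> bool" where
  "Pn l n \<sigma> \<rho> 0 S = (card S = 1)"
| "Pn l n \<sigma> \<rho> (Suc k) S = (card S = 1 \<or>
     (\<exists>i\<in>bvec l. card (zeta \<sigma> \<rho> S (Some i) None) = card S \<and>
        (\<forall>ob\<in>bvec n. zeta \<sigma> \<rho> S (Some i) (Some ob) \<noteq> {} \<longrightarrow>
             Pn l n \<sigma> \<rho> k (zeta \<sigma> \<rho> S (Some i) (Some ob)))))"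

definition Gamma :: "nat \<Rightarrow> nat \<Rightarrow> (bool list \<Rightarrow> bool list \<Rightarrow> bool list) \<Rightarrow> (bool list \<Rightarrow> bool list) \<Rightarrow>
    bool list set \<Rightarrow> enat" where
  "Gamma l n \<sigma> \<rho> S = (if \<exists>k. Pn l n \<sigma> \<rho> k S then enat (LEAST k. Pn l n \<sigma> \<rho> k S) else \<infinity>)"

definition online_observable :: "nat \<Rightarrow> nat \<Rightarrow> nat \<Rightarrow>
    (bool list \<Rightarrow> bool list \<Rightarrow> bool list) \<Rightarrow> (bool list \<Rightarrow> bool list) \<Rightarrow> bool" where
  "online_observable l m n \<sigma> \<rho> \<longleftrightarrow>
     (\<forall>ob\<in>bvec n. zeta \<sigma> \<rho> (bvec m) None (Some ob) \<noteq> {} \<longrightarrow>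
        Gamma l n \<sigma> \<rho> (zeta \<sigma> \<rho> (bvec m) None (Some ob)) \<noteq> \<infinity>)"

end

theory Submission
  imports Defs
begin

text \<open>If one input sequence \<open>I\<close> separates all states by their output sequences, the online
  observer can simply feed \<open>I\<close>. Within a set of states that share their current output and are
  separated by \<open>i # J\<close>, the step \<open>\<sigma> i\<close> is injective and the successors are separated by \<open>J\<close>; so by
  induction on the length of \<open>I\<close>, every output class of the initial state set satisfies
  \<open>P\<^sub>k\<close> with \<open>k = length I\<close>.\<close>

lemma H_Nil [simp]: "H \<sigma> \<rho> s [] = [\<rho> s]"
  by (simp add: H_def)

lemma H_Cons [simp]: "H \<sigma> \<rho> s (i # J) = \<rho> s # H \<sigma> \<rho> (\<sigma> i s) J"
  by (simp add: H_def)

lemma zeta_None_Some: "zeta \<sigma> \<rho> S None (Some ob) = {s \<in> S. \<rho> s = ob}"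
  by (auto simp: zeta_def xi_def)

lemma zeta_Some_None: "zeta \<sigma> \<rho> S (Some i) None = \<sigma> i ` S"
  by (auto simp: zeta_def xi_def)

lemma zeta_Some_Some: "zeta \<sigma> \<rho> S (Some i) (Some ob) = {t \<in> \<sigma> i ` S. \<rho> t = ob}"
  by (auto simp: zeta_def xi_def)

lemma inj_on_H_Cons_const_output:
  assumes "\<forall>s\<in>S. \<rho> s = ob" and "inj_on (\<lambda>s. H \<sigma> \<rho> s (i # J)) S"
  shows "inj_on (\<lambda>s. H \<sigma> \<rho> (\<sigma> i s) J) S"
  using assms by (simp add: inj_on_def)

lemma inj_on_H_step:
  assumes "inj_on (\<lambda>s. H \<sigma> \<rho> (\<sigma> i s) J) S"
  shows "inj_on (\<sigma> i) S" and "inj_on (\<lambda>t. H \<sigma> \<rho> t J) (\<sigma> i ` S)"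
  using assms by (auto simp: inj_on_def)

lemma Pn_length_if_inj_on_H:
  assumes "set J \<subseteq> bvec l" and "S \<noteq> {}" and "\<forall>s\<in>S. \<rho> s = ob"
    and "inj_on (\<lambda>s. H \<sigma> \<rho> s J) S"
  shows "Pn l n \<sigma> \<rho> (length J) S"
  using assms
proof (induction J arbitrary: S ob)
  case Nil
  then obtain x where "x \<in> S"
    by blast
  with Nil.prems(3,4) have "S = {x}"
    by (auto simp: inj_on_def)
  then show ?case
    by simp
next
  case (Cons i J)
  have step: "inj_on (\<lambda>s. H \<sigma> \<rho> (\<sigma> i s) J) S"
    using Cons.prems(3,4) by (rule inj_on_H_Cons_const_output)
  have "card (zeta \<sigma> \<rho> S (Some i) None) = card S"
    using card_image[OF inj_on_H_step(1)[OF step]] by (simp add: zeta_Some_None)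
  moreover have "Pn l n \<sigma> \<rho> (length J) (zeta \<sigma> \<rho> S (Some i) (Some ob'))"
    if "zeta \<sigma> \<rho> S (Some i) (Some ob') \<noteq> {}" for ob'
  proof (rule Cons.IH)
    show "inj_on (\<lambda>t. H \<sigma> \<rho> t J) (zeta \<sigma> \<rho> S (Some i) (Some ob'))"
      by (rule inj_on_subset[OF inj_on_H_step(2)[OF step]]) (auto simp: zeta_Some_Some)
  qed (use Cons.prems(1) that in \<open>auto simp: zeta_Some_Some\<close>)
  moreover have "i \<in> bvec l"
    using Cons.prems(1) by simp
  ultimately show ?case
    unfolding length_Cons Pn.simps by blast
qed

theorem lemma2:
  fixes l m n :: nat
    and \<sigma> :: "bool list \<Rightarrow> bool list \<Rightarrow> bool list"
    and \<rho> :: "bool list \<Rightarrow> bool list"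
  assumes "bcn l m n \<sigma> \<rho>"
    and "type3_observable l m n \<sigma> \<rho>"
  shows "online_observable l m n \<sigma> \<rho>"
proof -
  obtain I where I: "set I \<subseteq> bvec l" "inj_on (\<lambda>s. H \<sigma> \<rho> s I) (bvec m)"
    using assms(2) unfolding type3_observable_def inj_on_def by blast
  have "Pn l n \<sigma> \<rho> (length I) (zeta \<sigma> \<rho> (bvec m) None (Some ob))"
    if "zeta \<sigma> \<rho> (bvec m) None (Some ob) \<noteq> {}" for ob
  proof (rule Pn_length_if_inj_on_H[OF I(1) that, where ob = ob])
    show "inj_on (\<lambda>s. H \<sigma> \<rho> s I) (zeta \<sigma> \<rho> (bvec m) None (Some ob))"
      by (rule inj_on_subset[OF I(2)]) (auto simp: zeta_None_Some)
  qed (auto simp: zeta_None_Some)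
  then show ?thesis
    unfolding online_observable_def Gamma_def by auto
qed

end
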